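(* Let $n\ge3$, $\zeta=2\pi/n$, $m\in\big([1,n/4)\cup(n/4,n/2]\big)\cap\mathbb{N}$, $a>0$, and let $V$ be smooth with $V''(a^2)\neq0$. Define $\sigma_m=\operatorname{sgn}(V''(a^2))$ if $m\in[1,n/4)$ and $\sigma_m=-\operatorname{sgn}(V''(a^2))$ if $m\in(n/4,n/2]$. If $\sigma_m<0$, or $\sigma_m>0$ and $\phi_1(a)<1$, then the relative equilibrium $q_j(t)=ae^{i\omega t}e^{ijm\zeta}$ (equivalently the equilibrium $\mathbf{a}_m$ of $\mathcal{J}\dot u=\nabla H(u)$) is linearly stable, i.e. $\mathcal{J}D^2H(\mathbf{a}_m)$ has only purely imaginary eigenvalues.
   Context: Lattice: $i\dot q_j=V'(|q_j|^2)q_j+(q_{j+1}-q_j)+(q_{j-1}-q_j)$, $q_j\in\mathbb{C}$, $q_{j+n}=q_j$, with $\omega=4\sin^2(m\zeta/2)-V'(a^2)$. Identify $\mathbb{C}\cong\mathbb{R}^2$, $J=\begin{pmatrix}0&-1\\1&0\end{pmatrix}$, $\mathcal{J}=\mathrm{diag}(J,\dots,J)$, $H(u)=\frac12\sum_{j=1}^n\{V(|u_j|^2)+\omega|u_j|^2-|u_{j+1}-u_j|^2\}$ for $u\in(\mathbb{R}^2)^n$ (indices mod $n$), so that $q_j=e^{i\omega t}u_j$ turns the lattice into $\mathcal{J}\dot u=\nabla H(u)$. $\mathbf{a}_m=(a_1,\dots,a_n)$ with $a_j=ae^{jm\zeta J}e_1$. Also $\alpha_1=4\cos(m\zeta)\sin^2(\zeta/2)$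 and $\phi_1(a)=\frac{2a^2}{\alpha_1}V''(a^2)$. *)

theory Defs
  imports "HOL-Analysis.Derivative" "Jordan_Normal_Form.Char_Poly"
begin

definition smooth_fun :: "(real \<Rightarrow> real) \<Rightarrow> bool" where
  "smooth_fun V \<longleftrightarrow> (\<forall>k x. ((deriv ^^ k) V) differentiable (at x))"

text \<open>A point of (R^2)^n is encoded as x :: nat => real, where u_j = (x (2j), x (2j+1)),
  j = 0..n-1, indices of u taken mod n.\<close>

definition lat_omega :: "(real \<Rightarrow> real) \<Rightarrow> nat \<Rightarrow> nat \<Rightarrow> real \<Rightarrow> real" where
  "lat_omega V n m a = 4 * (sin (real m * (2 * pi / real n) / 2))\<^sup>2 - deriv V (a\<^sup>2)"

definition lat_H :: "(real \<Rightarrow> real) \<Rightarrow> nat \<Rightarrow> real \<Rightarrow> (nat \<Rightarrow> real) \<Rightarrow> real" where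
  "lat_H V n \<omega> x = (1/2) * (\<Sum>j<n.
      V ((x (2*j))\<^sup>2 + (x (2*j+1))\<^sup>2) + \<omega> * ((x (2*j))\<^sup>2 + (x (2*j+1))\<^sup>2)
      - ((x (2*((j+1) mod n)) - x (2*j))\<^sup>2 + (x (2*((j+1) mod n)+1) - x (2*j+1))\<^sup>2))"

definition partial :: "nat \<Rightarrow> ((nat \<Rightarrow> real) \<Rightarrow> real) \<Rightarrow> (nat \<Rightarrow> real) \<Rightarrow> real" where
  "partial k f x = deriv (\<lambda>s. f (x(k := x k + s))) 0"

definition hessian_mat :: "nat \<Rightarrow> ((nat \<Rightarrow> real) \<Rightarrow> real) \<Rightarrow> (nat \<Rightarrow> real) \<Rightarrow> real mat" where
  "hessian_mat N f x = mat N N (\<lambda>(k, l). partial l (partial k f) x)"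

text \<open>The symplectic matrix diag(J,...,J), J = [[0,-1],[1,0]], of size 2n.\<close>
definition sympl_J :: "nat \<Rightarrow> real mat" where
  "sympl_J n = mat (2*n) (2*n) (\<lambda>(k, l).
      if k div 2 = l div 2 then (if even k \<and> odd l then -1 else if odd k \<and> even l then 1 else 0)
      else 0)"

definition eq_am :: "nat \<Rightarrow> nat \<Rightarrow> real \<Rightarrow> nat \<Rightarrow> real" where
  "eq_am n m a k = (if even k then a * cos (real (k div 2) * real m * (2 * pi / real n))
                    else a * sin (real (k div 2) * real m * (2 * pi / real n)))"

definition alpha1 :: "nat \<Rightarrow> nat \<Rightarrow> real" where
  "alpha1 n m = 4 * cos (real m * (2 * pi / real n)) * (sin ((2 * pi / real n) / 2))\<^sup>2"

definition phi1 :: "(real \<Rightarrow> real) \<Rightarrow> nat \<Rightarrow> nat \<Rightarrow> real \<Rightarrow> real" where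
  "phi1 V n m a = 2 * a\<^sup>2 / alpha1 n m * deriv (deriv V) (a\<^sup>2)"

definition sigma_m :: "(real \<Rightarrow> real) \<Rightarrow> nat \<Rightarrow> nat \<Rightarrow> real \<Rightarrow> real" where
  "sigma_m V n m a = (if real m < real n / 4 then sgn (deriv (deriv V) (a\<^sup>2))
                      else - sgn (deriv (deriv V) (a\<^sup>2)))"

definition linearly_stable :: "(real \<Rightarrow> real) \<Rightarrow> nat \<Rightarrow> nat \<Rightarrow> real \<Rightarrow> bool" where
  "linearly_stable V n m a \<longleftrightarrow>
     (\<forall>ev::complex. eigenvalue (map_mat complex_of_real
         (sympl_J n * hessian_mat (2*n) (lat_H V n (lat_omega V n m a)) (eq_am n m a))) ev
       \<longrightarrow> Re ev = 0)"

end

theory Submission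
  imports Defs
begin

(* At the equilibrium every site lies on the circle of radius a, so the Hessian form of H is
     sum_j 2 V''(a^2) <a_j,t_j> <a_j,v_j> + (V'(a^2) + omega) <t_j,v_j> - <t_(j+1) - t_j, v_(j+1) - v_j>.
   An eigenvector v of J D^2H(a_m) with eigenvalue lambda satisfies t . D^2H v = lambda * sympl_form t v for
   every test vector t. Testing with plane waves of wave number k written in the frame that rotates with
   a_j decouples the eigenvalue problem: the Fourier coefficients P, Q of the radial and tangential
   components of v satisfy (beta + alpha) P = z Q and alpha Q = - z P, where
     alpha = 2 cos(m zeta) (cos(k zeta) - 1),  beta = 2 V''(a^2) a^2,  z = lambda + 2 i sin(m zeta) sin(k zeta),
   so z^2 = - alpha (alpha + beta) whenever (P, Q) <> 0, which happens for some k since v <> 0.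
   The hypotheses on sigma_m and phi_1 say precisely that alpha (alpha + beta) >= 0 for every k;
   hence z, and with it lambda, is purely imaginary. *)

unbundle no vec_syntax

section \<open>The Hessian of the lattice Hamiltonian\<close>

lemma of_real_of_bool [simp]: "of_real (of_bool P) = of_bool P"
  by (cases P) simp_all

lemma fun_upd_add_eq:
  fixes x :: "nat \<Rightarrow> real"
  shows "x(k := x k + s) = (\<lambda>i. x i + s * of_bool (k = i))"
  by (auto simp: fun_eq_iff)

lemma DERIV_comp_differentiable:
  assumes "\<And>y. V differentiable at y" "(f has_real_derivative f') (at s)"
  shows "((\<lambda>s. V (f s)) has_real_derivative (deriv V (f s) * f')) (at s)"
  using DERIV_chain2[OF _ assms(2)] assms(1) DERIV_deriv_iff_real_differentiable by blast

definition lat_grad :: "(real \<Rightarrow> real) \<Rightarrow> nat \<Rightarrow> real \<Rightarrow> nat \<Rightarrow> (nat \<Rightarrow> real) \<Rightarrow> real" where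
  "lat_grad V n w k x = (\<Sum>j<n.
      (deriv V ((x (2*j))\<^sup>2 + (x (2*j+1))\<^sup>2) + w) * (x (2*j) * of_bool (k = 2*j) + x (2*j+1) * of_bool (k = 2*j+1))
    - (x (2*((j+1) mod n)) - x (2*j)) * (of_bool (k = 2*((j+1) mod n)) - of_bool (k = 2*j))
    - (x (2*((j+1) mod n)+1) - x (2*j+1)) * (of_bool (k = 2*((j+1) mod n)+1) - of_bool (k = 2*j+1)))"

lemma partial_lat_H:
  assumes "\<And>y. V differentiable at y"
  shows "partial k (lat_H V n w) x = lat_grad V n w k x"
proof -
  have "((\<lambda>s. lat_H V n w (\<lambda>i. x i + s * of_bool (k = i))) has_real_derivative lat_grad V n w k x) (at 0)"
    unfolding lat_H_def
    apply (rule derivative_eq_intros DERIV_comp_differentiable[OF assms] refl)+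
    apply (simp add: lat_grad_def sum_distrib_right)
    apply (rule sum.cong, simp)
    apply (simp add: algebra_simps)
    done
  then show ?thesis
    unfolding partial_def fun_upd_add_eq by (rule DERIV_imp_deriv)
qed

text \<open>Each summand is a sum of products \<open>f k * g l\<close>, so that \<open>bilin_form_scaled_rank1\<close> evaluates it.\<close>
definition lat_hess :: "(real \<Rightarrow> real) \<Rightarrow> nat \<Rightarrow> real \<Rightarrow> nat \<Rightarrow> nat \<Rightarrow> (nat \<Rightarrow> real) \<Rightarrow> real" where
  "lat_hess V n w k l x = (\<Sum>j<n.
      2 * deriv (deriv V) ((x (2*j))\<^sup>2 + (x (2*j+1))\<^sup>2)
        * ((x (2*j) * of_bool (k = 2*j) + x (2*j+1) * of_bool (k = 2*j+1))
           * (x (2*j) * of_bool (l = 2*j) + x (2*j+1) * of_bool (l = 2*j+1)))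
    + (deriv V ((x (2*j))\<^sup>2 + (x (2*j+1))\<^sup>2) + w) * (of_bool (k = 2*j) * of_bool (l = 2*j))
    + (deriv V ((x (2*j))\<^sup>2 + (x (2*j+1))\<^sup>2) + w) * (of_bool (k = 2*j+1) * of_bool (l = 2*j+1))
    - (of_bool (k = 2*((j+1) mod n)) - of_bool (k = 2*j)) * (of_bool (l = 2*((j+1) mod n)) - of_bool (l = 2*j))
    - (of_bool (k = 2*((j+1) mod n)+1) - of_bool (k = 2*j+1)) * (of_bool (l = 2*((j+1) mod n)+1) - of_bool (l = 2*j+1)))"

lemma hessian_mat_lat_H:
  assumes "\<And>y. V differentiable at y" "\<And>y. deriv V differentiable at y"
    and "k < N" "l < N"
  shows "hessian_mat N (lat_H V n w) x $$ (k, l) = lat_hess V n w k l x"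
proof -
  have "((\<lambda>s. lat_grad V n w k (\<lambda>i. x i + s * of_bool (l = i))) has_real_derivative lat_hess V n w k l x) (at 0)"
    unfolding lat_grad_def
    apply (rule derivative_eq_intros DERIV_comp_differentiable[OF assms(2)] refl)+
    apply (simp add: lat_hess_def)
    apply (rule sum.cong, simp)
    apply (simp add: algebra_simps)
    done
  then have "partial l (lat_grad V n w k) x = lat_hess V n w k l x"
    unfolding partial_def fun_upd_add_eq by (rule DERIV_imp_deriv)
  with assms show ?thesis
    by (simp add: hessian_mat_def partial_lat_H[OF assms(1), abs_def])
qed

definition bilin_form :: "nat \<Rightarrow> (nat \<Rightarrow> complex) \<Rightarrow> (nat \<Rightarrow> nat \<Rightarrow> real) \<Rightarrow> (nat \<Rightarrow> complex) \<Rightarrow> complex" where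
  "bilin_form N t M v = (\<Sum>k<N. \<Sum>l<N. t k * of_real (M k l) * v l)"

lemma bilin_form_cong:
  "(\<And>k l. k < N \<Longrightarrow> l < N \<Longrightarrow> M k l = M' k l) \<Longrightarrow> bilin_form N t M v = bilin_form N t M' v"
  by (simp add: bilin_form_def)

lemma bilin_form_sum: "bilin_form N t (\<lambda>k l. \<Sum>j\<in>J. M j k l) v = (\<Sum>j\<in>J. bilin_form N t (M j) v)"
  by (simp add: bilin_form_def sum_distrib_left sum_distrib_right flip: sum.swap[of _ J])

lemma bilin_form_add: "bilin_form N t (\<lambda>k l. M k l + M' k l) v = bilin_form N t M v + bilin_form N t M' v"
  by (simp add: bilin_form_def algebra_simps sum.distrib)

lemma bilin_form_diff: "bilin_form N t (\<lambda>k l. M k l - M' k l) v = bilin_form N t M v - bilin_form N t M' v"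
  by (simp add: bilin_form_def algebra_simps sum_subtractf)

lemma bilin_form_scaled_rank1:
  "bilin_form N t (\<lambda>k l. c * (f k * g l)) v
     = of_real c * (\<Sum>k<N. of_real (f k) * t k) * (\<Sum>l<N. of_real (g l) * v l)"
  by (simp add: bilin_form_def sum_product sum_distrib_left mult_ac)

lemma bilin_form_rank1:
  "bilin_form N t (\<lambda>k l. f k * g l) v = (\<Sum>k<N. of_real (f k) * t k) * (\<Sum>l<N. of_real (g l) * v l)"
  using bilin_form_scaled_rank1[of N t 1] by simp

definition lat_hess_site ::
    "(real \<Rightarrow> real) \<Rightarrow> nat \<Rightarrow> real \<Rightarrow> (nat \<Rightarrow> real) \<Rightarrow> (nat \<Rightarrow> complex) \<Rightarrow> (nat \<Rightarrow> complex) \<Rightarrow> nat \<Rightarrow> complex" where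
  "lat_hess_site V n w x t v j =
      of_real (2 * deriv (deriv V) ((x (2*j))\<^sup>2 + (x (2*j+1))\<^sup>2))
        * (of_real (x (2*j)) * t (2*j) + of_real (x (2*j+1)) * t (2*j+1))
        * (of_real (x (2*j)) * v (2*j) + of_real (x (2*j+1)) * v (2*j+1))
    + of_real (deriv V ((x (2*j))\<^sup>2 + (x (2*j+1))\<^sup>2) + w) * (t (2*j) * v (2*j) + t (2*j+1) * v (2*j+1))
    - (t (2*((j+1) mod n)) - t (2*j)) * (v (2*((j+1) mod n)) - v (2*j))
    - (t (2*((j+1) mod n)+1) - t (2*j+1)) * (v (2*((j+1) mod n)+1) - v (2*j+1))"

lemma bilin_form_site:
  assumes "a < N" "b < N" "a' < N" "b' < N"
  shows "bilin_form N t (\<lambda>k l.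
        2 * D * ((xa * of_bool (k = a) + xb * of_bool (k = b)) * (xa * of_bool (l = a) + xb * of_bool (l = b)))
      + c * (of_bool (k = a) * of_bool (l = a)) + c * (of_bool (k = b) * of_bool (l = b))
      - (of_bool (k = a') - of_bool (k = a)) * (of_bool (l = a') - of_bool (l = a))
      - (of_bool (k = b') - of_bool (k = b)) * (of_bool (l = b') - of_bool (l = b))) v
    = of_real (2 * D) * (of_real xa * t a + of_real xb * t b) * (of_real xa * v a + of_real xb * v b)
      + of_real c * (t a * v a + t b * v b) - (t a' - t a) * (v a' - v a) - (t b' - t b) * (v b' - v b)"
  unfolding bilin_form_add bilin_form_diff bilin_form_scaled_rank1 bilin_form_rank1
  using assms by (simp add: sum.distrib sum_subtractf ring_distribs mult.assoc flip: sum_distrib_left)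

lemma bilin_form_lat_hess:
  assumes "0 < n"
  shows "bilin_form (2*n) t (\<lambda>k l. lat_hess V n w k l x) v = (\<Sum>j<n. lat_hess_site V n w x t v j)"
proof -
  have "2*j < 2*n" "2*j+1 < 2*n" "2*((j+1) mod n) < 2*n" "2*((j+1) mod n)+1 < 2*n" if "j < n" for j
    using that assms mod_less_divisor[OF assms, of "j+1"] by linarith+
  then show ?thesis
    unfolding lat_hess_def bilin_form_sum lat_hess_site_def
    by (intro sum.cong refl bilin_form_site) simp_all
qed

lemma sum_lessThan_double: "(\<Sum>i<2*(n::nat). f i) = (\<Sum>j<n. f (2*j) + f (2*j+1))"
  by (induction n) (simp_all add: algebra_simps)

lemma sympl_J_entry:
  assumes "i < 2*n" "l < 2*n"
  shows "sympl_J n $$ (i, l) = (if even i then - of_bool (l = i+1) else of_bool (l = i-1))"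
proof -
  have "i div 2 = l div 2 \<and> even i \<and> odd l \<longleftrightarrow> even i \<and> l = i+1"
    and "i div 2 = l div 2 \<and> odd i \<and> even l \<longleftrightarrow> odd i \<and> l = i-1"
    by presburger+
  with assms show ?thesis
    by (auto simp: sympl_J_def)
qed

lemma sympl_J_mult_vec:
  assumes "w \<in> carrier_vec (2*n)" "i < 2*n"
  shows "(map_mat of_real (sympl_J n) *\<^sub>v w) $ i = (if even i then - (w $ (i+1)) else w $ (i-1))"
proof -
  have "even i \<Longrightarrow> i+1 < 2*n"
    using assms(2) by presburger
  with assms show ?thesis
    by (auto simp: sympl_J_def[of n, THEN arg_cong[of _ _ dim_row]] sympl_J_def[of n, THEN arg_cong[of _ _ dim_col]]
        scalar_prod_def sympl_J_entry atLeast0LessThan sum_negf)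
qed

definition sympl_form :: "nat \<Rightarrow> (nat \<Rightarrow> complex) \<Rightarrow> (nat \<Rightarrow> complex) \<Rightarrow> complex" where
  "sympl_form n t v = (\<Sum>j<n. t (2*j) * v (2*j+1) - t (2*j+1) * v (2*j))"

lemma bilin_form_eigenvector:
  fixes M :: "real mat"
  assumes M: "M \<in> carrier_mat (2*n) (2*n)" and v: "v \<in> carrier_vec (2*n)"
    and eigen: "map_mat of_real (sympl_J n * M) *\<^sub>v v = ev \<cdot>\<^sub>v v"
  shows "bilin_form (2*n) t (\<lambda>k l. M $$ (k, l)) (($) v) = ev * sympl_form n t (($) v)"
proof -
  define u where "u = map_mat of_real M *\<^sub>v v"
  have u: "u \<in> carrier_vec (2*n)"
    unfolding u_def carrier_vec_def using M by simp
  have "map_mat of_real (sympl_J n) *\<^sub>v u = ev \<cdot>\<^sub>v v"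
    using eigen M v
    by (simp add: u_def of_real_hom.mat_hom_mult[of _ "2*n" "2*n"] sympl_J_def
        flip: assoc_mult_mat_vec[of _ "2*n" "2*n" _ "2*n"])
  then have Ju: "(map_mat of_real (sympl_J n) *\<^sub>v u) $ i = ev * v $ i" if "i < 2*n" for i
    using v that by simp
  have u_even: "u $ (2*j) = ev * v $ (2*j+1)" if "j < n" for j
    using Ju[of "2*j+1"] sympl_J_mult_vec[OF u, of "2*j+1"] that by simp
  have u_odd: "u $ (2*j+1) = - (ev * v $ (2*j))" if "j < n" for j
  proof -
    have "- (u $ (2*j+1)) = ev * v $ (2*j)"
      using Ju[of "2*j"] sympl_J_mult_vec[OF u, of "2*j"] that by simp
    then show ?thesis
      by (metis minus_minus)
  qed
  have "bilin_form (2*n) t (\<lambda>k l. M $$ (k, l)) (($) v) = (\<Sum>k<2*n. t k * u $ k)"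
    using M v
    by (simp add: bilin_form_def u_def scalar_prod_def atLeast0LessThan sum_distrib_left mult.assoc)
  also have "\<dots> = (\<Sum>j<n. t (2*j) * u $ (2*j) + t (2*j+1) * u $ (2*j+1))"
    by (rule sum_lessThan_double)
  also have "\<dots> = (\<Sum>j<n. ev * (t (2*j) * v $ (2*j+1) - t (2*j+1) * v $ (2*j)))"
    by (rule sum.cong) (simp_all add: u_even u_odd[simplified] right_diff_distrib mult.left_commute)
  also have "\<dots> = ev * sympl_form n t (($) v)"
    by (simp add: sympl_form_def sum_distrib_left)
  finally show ?thesis .
qed

section \<open>Discrete Fourier transform\<close>

definition dft :: "nat \<Rightarrow> (nat \<Rightarrow> complex) \<Rightarrow> nat \<Rightarrow> complex" where
  "dft n f k = (\<Sum>j<n. cis (- (real j * real k * (2 * pi / real n))) * f j)"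

lemma cis_root_of_unity_ne_1:
  fixes i j n :: nat
  assumes "i < n" "j < n" "i \<noteq> j"
  shows "cis ((real j - real i) * (2 * pi / real n)) \<noteq> 1"
proof
  assume "cis ((real j - real i) * (2 * pi / real n)) = 1"
  then have "cos ((real j - real i) * (2 * pi / real n)) = 1"
    by (metis cis.sel(1) one_complex.sel(1))
  then obtain q :: int where "(real j - real i) * (2 * pi / real n) = real_of_int q * 2 * pi"
    using cos_one_2pi_int by blast
  with assms have "2 * pi * (real j - real i) = 2 * pi * (real_of_int q * real n)"
    by (simp add: field_simps)
  then have "real j - real i = real_of_int q * real n"
    by simp
  then have q: "int j - int i = q * int n"
    by (metis of_int_eq_iff of_int_diff of_int_mult of_int_of_nat_eq)
  have "\<bar>int j - int i\<bar> < int n"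
    using assms by auto
  then have "\<bar>q\<bar> * int n < 1 * int n"
    by (simp add: q abs_mult)
  then have "q = 0"
    by (simp only: mult_less_cancel_right) auto
  with q assms show False
    by simp
qed

lemma sum_cis_orthogonal:
  fixes i j n :: nat
  assumes "i < n" "j < n"
  shows "(\<Sum>k<n. cis (real j * real k * (2 * pi / real n)) * cis (- (real i * real k * (2 * pi / real n))))
       = (if i = j then of_nat n else 0)"
proof -
  define z where "z = 2 * pi / real n"
  define w where "w = cis ((real j - real i) * z)"
  have powers: "cis (real j * real k * z) * cis (- (real i * real k * z)) = w ^ k" for k
  proof -
    have "real j * real k * z + - (real i * real k * z) = real k * ((real j - real i) * z)"
      by (simp add: algebra_simps)
    then show ?thesis
      unfolding w_def DeMoivre cis_mult by simp
  qed
  have "real n * ((real j - real i) * z) = 2 * pi * (real j - real i)"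
    using assms by (simp add: z_def field_simps)
  then have "w ^ n = cis (2 * pi * (real j - real i))"
    unfolding w_def DeMoivre by (rule arg_cong[where f = cis])
  also have "\<dots> = 1"
    by (rule cis_multiple_2pi) simp
  finally have "w ^ n = 1" .
  have "(\<Sum>k<n. cis (real j * real k * z) * cis (- (real i * real k * z))) = (\<Sum>k<n. w ^ k)"
    by (simp only: powers)
  also have "\<dots> = (if i = j then of_nat n else 0)"
  proof (cases "i = j")
    case True
    then show ?thesis
      by (simp add: w_def)
  next
    case False
    then have "w \<noteq> 1"
      unfolding w_def z_def using cis_root_of_unity_ne_1 assms by blast
    with False \<open>w ^ n = 1\<close> show ?thesis
      by (simp add: sum_gp_strict)
  qed
  finally show ?thesis
    unfolding z_def .
qed

lemma inverse_dft:
  assumes "j < n"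
  shows "(\<Sum>k<n. cis (real j * real k * (2 * pi / real n)) * dft n f k) = of_nat n * f j"
proof -
  have "(\<Sum>k<n. cis (real j * real k * (2 * pi / real n)) * dft n f k)
      = (\<Sum>i<n. f i * (\<Sum>k<n. cis (real j * real k * (2 * pi / real n)) * cis (- (real i * real k * (2 * pi / real n)))))"
    unfolding dft_def sum_distrib_left
    by (subst sum.swap) (simp add: mult_ac)
  also have "\<dots> = (\<Sum>i<n. if i = j then f i * of_nat n else 0)"
  proof (rule sum.cong[OF refl])
    fix i assume "i \<in> {..<n}"
    then have i: "i < n" by simp
    show "f i * (\<Sum>k<n. cis (real j * real k * (2 * pi / real n)) * cis (- (real i * real k * (2 * pi / real n))))
        = (if i = j then f i * of_nat n else 0)"
      unfolding sum_cis_orthogonal[OF i assms] by simp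
  qed
  finally show ?thesis
    using assms by (simp add: mult.commute)
qed

lemma dft_eq_0_imp_eq_0:
  assumes "\<And>k. k < n \<Longrightarrow> dft n f k = 0" "j < n"
  shows "f j = 0"
  using inverse_dft[OF assms(2), of f] assms by simp

definition radial :: "(nat \<Rightarrow> real) \<Rightarrow> (nat \<Rightarrow> complex) \<Rightarrow> nat \<Rightarrow> complex" where
  "radial A v j = of_real (cos (A j)) * v (2*j) + of_real (sin (A j)) * v (2*j+1)"

definition tangential :: "(nat \<Rightarrow> real) \<Rightarrow> (nat \<Rightarrow> complex) \<Rightarrow> nat \<Rightarrow> complex" where
  "tangential A v j = - of_real (sin (A j)) * v (2*j) + of_real (cos (A j)) * v (2*j+1)"

lemma radial_tangential_inverse:
  "v (2*j) = of_real (cos (A j)) * radial A v j - of_real (sin (A j)) * tangential A v j"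
  "v (2*j+1) = of_real (sin (A j)) * radial A v j + of_real (cos (A j)) * tangential A v j"
proof -
  have cs: "of_real (cos (A j)) * of_real (cos (A j)) + of_real (sin (A j)) * of_real (sin (A j)) = (1::complex)"
    by (metis of_real_1 of_real_add of_real_mult sin_cos_squared_add3)
  have "of_real (cos (A j)) * radial A v j - of_real (sin (A j)) * tangential A v j
      = (of_real (cos (A j)) * of_real (cos (A j)) + of_real (sin (A j)) * of_real (sin (A j))) * v (2*j)"
    "of_real (sin (A j)) * radial A v j + of_real (cos (A j)) * tangential A v j
      = (of_real (cos (A j)) * of_real (cos (A j)) + of_real (sin (A j)) * of_real (sin (A j))) * v (2*j+1)"
    by (simp_all add: radial_def tangential_def algebra_simps)
  with cs show "v (2*j) = of_real (cos (A j)) * radial A v j - of_real (sin (A j)) * tangential A v j"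
    "v (2*j+1) = of_real (sin (A j)) * radial A v j + of_real (cos (A j)) * tangential A v j"
    by simp_all
qed

lemma exists_nonzero_mode:
  assumes "v \<in> carrier_vec (2*n)" "v \<noteq> 0\<^sub>v (2*n)"
  shows "\<exists>k<n. dft n (radial A (($) v)) k \<noteq> 0 \<or> dft n (tangential A (($) v)) k \<noteq> 0"
proof (rule ccontr)
  assume "\<not> ?thesis"
  then have "radial A (($) v) j = 0" "tangential A (($) v) j = 0" if "j < n" for j
    using dft_eq_0_imp_eq_0 that by blast+
  then have "v $ (2*j) = 0" "v $ (2*j+1) = 0" if "j < n" for j
    using radial_tangential_inverse[of "($) v" j A] that by simp_all
  moreover have "i = 2 * (i div 2) \<or> i = 2 * (i div 2) + 1" for i :: nat
    by presburger
  ultimately have "v $ i = 0" if "i < 2*n" for i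
    using that by (metis less_mult_imp_div_less mult.commute)
  then have "v = 0\<^sub>v (2*n)"
    using assms(1) by (intro eq_vecI) auto
  with assms(2) show False ..
qed

section \<open>Rotating plane waves\<close>

lemma sum_lessThan_Suc_periodic:
  fixes f :: "nat \<Rightarrow> 'a::ab_group_add"
  assumes "f n = f 0"
  shows "(\<Sum>j<n. f (Suc j)) = (\<Sum>j<n. f j)"
proof -
  have "f 0 + (\<Sum>j<n. f (Suc j)) = (\<Sum>j<n. f j) + f n"
    by (simp flip: sum.lessThan_Suc_shift)
  with assms show ?thesis
    by (simp add: add.commute)
qed

lemma periodic_Suc_mod:
  assumes "j < n" "f n = f 0"
  shows "f ((j+1) mod n) = f (Suc j)"
  using assms by (cases "j + 1 = n") simp_all

text \<open>Summation by parts against the wave \<open>E\<close> (geometric of ratio \<open>em\<close>) whose polarisation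
  turns by \<open>th\<close> per site; periodicity makes the boundary terms cancel.\<close>
lemma coupling_sum_rotating_wave:
  fixes vv vw E :: "nat \<Rightarrow> complex" and A :: "nat \<Rightarrow> real" and p q em ep :: complex
  assumes A: "\<And>j. A (Suc j) = A j + th" and E: "\<And>j. E (Suc j) = E j * em" and emp: "em * ep = 1"
    and per: "E n = E 0" "cos (A n) = cos (A 0)" "sin (A n) = sin (A 0)" "vv n = vv 0" "vw n = vw 0"
  defines "P \<equiv> (\<Sum>j<n. E j * (of_real (cos (A j)) * vv j + of_real (sin (A j)) * vw j))"
    and "Q \<equiv> (\<Sum>j<n. E j * (- of_real (sin (A j)) * vv j + of_real (cos (A j)) * vw j))"
    and "c \<equiv> of_real (cos th)" and "sn \<equiv> of_real (sin th)"
  defines "t0 \<equiv> (\<lambda>j. E j * (p * of_real (cos (A j)) - q * of_real (sin (A j))))"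
    and "t1 \<equiv> (\<lambda>j. E j * (p * of_real (sin (A j)) + q * of_real (cos (A j))))"
  shows "(\<Sum>j<n. (t0 (Suc j) - t0 j) * (vv (Suc j) - vv j) + (t1 (Suc j) - t1 j) * (vw (Suc j) - vw j))
     = 2 * (p * P + q * Q) - em * (c * (p * P + q * Q) + sn * (p * Q - q * P))
         - ep * (c * (p * P + q * Q) - sn * (p * Q - q * P))"
proof -
  define f where "f j = t0 j * vv j + t1 j * vw j" for j
  define g where "g j = t0 (Suc j) * vv j + t1 (Suc j) * vw j" for j
  define h where "h i = ep * E i * ((p * of_real (cos (A i - th)) - q * of_real (sin (A i - th))) * vv i
       + (p * of_real (sin (A i - th)) + q * of_real (cos (A i - th))) * vw i)" for i
  have h_Suc: "h (Suc j) = t0 j * vv (Suc j) + t1 j * vw (Suc j)" for j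
  proof -
    have "A (Suc j) - th = A j" "ep * E (Suc j) = E j"
      using A E emp by (simp_all add: algebra_simps)
    then show ?thesis
      unfolding h_def t0_def t1_def by (simp add: algebra_simps)
  qed
  have "(\<Sum>j<n. (t0 (Suc j) - t0 j) * (vv (Suc j) - vv j) + (t1 (Suc j) - t1 j) * (vw (Suc j) - vw j))
      = (\<Sum>j<n. f (Suc j)) + (\<Sum>j<n. f j) - (\<Sum>j<n. g j) - (\<Sum>j<n. h (Suc j))"
    by (simp add: h_Suc f_def g_def ring_distribs sum.distrib sum_subtractf)
  also have "(\<Sum>j<n. f (Suc j)) = (\<Sum>j<n. f j)"
    by (rule sum_lessThan_Suc_periodic) (simp add: f_def t0_def t1_def per)
  also have "(\<Sum>j<n. h (Suc j)) = (\<Sum>j<n. h j)"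
    by (rule sum_lessThan_Suc_periodic) (simp add: h_def per cos_diff sin_diff)
  also have "(\<Sum>j<n. f j) = p * P + q * Q"
    unfolding f_def P_def Q_def t0_def t1_def
    by (simp add: sum_distrib_left sum.distrib[symmetric] algebra_simps)
  also have "(\<Sum>j<n. g j) = em * (c * (p * P + q * Q) + sn * (p * Q - q * P))"
    unfolding g_def P_def Q_def t0_def t1_def c_def sn_def
    by (simp add: E A cos_add sin_add sum_distrib_left sum.distrib[symmetric] sum_subtractf[symmetric] algebra_simps)
  also have "(\<Sum>j<n. h j) = ep * (c * (p * P + q * Q) - sn * (p * Q - q * P))"
    unfolding h_def P_def Q_def c_def sn_def
    by (simp add: cos_diff sin_diff sum_distrib_left sum.distrib[symmetric] sum_subtractf[symmetric] algebra_simps)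
  finally show ?thesis
    by (simp only: mult_2)
qed

text \<open>The test vector whose radial and tangential components at site \<open>j\<close> are \<open>p * E j\<close> and \<open>q * E j\<close>.\<close>
definition rotating_test :: "(nat \<Rightarrow> complex) \<Rightarrow> (nat \<Rightarrow> real) \<Rightarrow> complex \<Rightarrow> complex \<Rightarrow> nat \<Rightarrow> complex" where
  "rotating_test E A p q i = E (i div 2) *
      (if even i then p * of_real (cos (A (i div 2))) - q * of_real (sin (A (i div 2)))
       else p * of_real (sin (A (i div 2))) + q * of_real (cos (A (i div 2))))"

lemma rotating_test_site:
  "rotating_test E A p q (2*j) = E j * (p * of_real (cos (A j)) - q * of_real (sin (A j)))"
  "rotating_test E A p q (2*j+1) = E j * (p * of_real (sin (A j)) + q * of_real (cos (A j)))"
  by (simp_all add: rotating_test_def)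

lemma sympl_form_rotating_test:
  "sympl_form n (rotating_test E A p q) v
    = p * (\<Sum>j<n. E j * tangential A v j) - q * (\<Sum>j<n. E j * radial A v j)"
proof -
  have "sympl_form n (rotating_test E A p q) v = (\<Sum>j<n. p * (E j * tangential A v j) - q * (E j * radial A v j))"
    unfolding sympl_form_def rotating_test_site
    by (rule sum.cong[OF refl]) (simp add: radial_def tangential_def ring_distribs mult.assoc mult.left_commute)
  then show ?thesis
    by (simp add: sum_subtractf sum_distrib_left)
qed

lemma lat_hess_site_rotating_test:
  fixes E v :: "nat \<Rightarrow> complex" and A x :: "nat \<Rightarrow> real" and p q :: complex and n j :: nat
  assumes x: "x (2*j) = a * cos (A j)" "x (2*j+1) = a * sin (A j)"
  defines "t \<equiv> rotating_test E A p q" and "j' \<equiv> (j + 1) mod n"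
  shows "lat_hess_site V n w x t v j
    = of_real (2 * deriv (deriv V) (a\<^sup>2) * a\<^sup>2) * p * (E j * radial A v j)
      + of_real (deriv V (a\<^sup>2) + w) * (p * (E j * radial A v j) + q * (E j * tangential A v j))
      - ((t (2*j') - t (2*j)) * (v (2*j') - v (2*j)) + (t (2*j'+1) - t (2*j+1)) * (v (2*j'+1) - v (2*j+1)))"
proof -
  have cs: "of_real (cos (A j)) * of_real (cos (A j)) + of_real (sin (A j)) * of_real (sin (A j)) = (1::complex)"
    by (metis of_real_1 of_real_add of_real_mult sin_cos_squared_add3)
  have radius: "(x (2*j))\<^sup>2 + (x (2*j+1))\<^sup>2 = a\<^sup>2"
    unfolding x using sin_cos_squared_add[of "A j"] by (simp add: power_mult_distrib flip: distrib_left)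
  have "of_real (a * cos (A j)) * t (2*j) + of_real (a * sin (A j)) * t (2*j+1)
      = of_real a * p * E j * (of_real (cos (A j)) * of_real (cos (A j)) + of_real (sin (A j)) * of_real (sin (A j)))"
    unfolding t_def rotating_test_site by (simp add: ring_distribs mult.assoc mult.left_commute)
  with cs have along_radius: "of_real (a * cos (A j)) * t (2*j) + of_real (a * sin (A j)) * t (2*j+1) = of_real a * p * E j"
    by simp
  show ?thesis
    unfolding lat_hess_site_def radius j'_def[symmetric]
    unfolding x along_radius
    by (simp add: t_def rotating_test_def radial_def tangential_def ring_distribs power2_eq_square
        mult.assoc mult.left_commute)
qed

lemma rotating_wave_equation:
  fixes v E :: "nat \<Rightarrow> complex" and A x :: "nat \<Rightarrow> real" and p q em ep ev :: complex
  assumes n: "0 < n"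
    and A: "\<And>j. A (Suc j) = A j + th" and A_per: "cos (A n) = cos (A 0)" "sin (A n) = sin (A 0)"
    and E: "\<And>j. E (Suc j) = E j * em" and emp: "em * ep = 1" and E_per: "E n = E 0"
    and x: "\<And>j. x (2*j) = a * cos (A j)" "\<And>j. x (2*j+1) = a * sin (A j)"
    and H: "\<And>t. (\<Sum>j<n. lat_hess_site V n w x t v j) = ev * sympl_form n t v"
  defines "P \<equiv> \<Sum>j<n. E j * radial A v j" and "Q \<equiv> \<Sum>j<n. E j * tangential A v j"
    and "c \<equiv> of_real (cos th)" and "sn \<equiv> of_real (sin th)"
  shows "of_real (2 * deriv (deriv V) (a\<^sup>2) * a\<^sup>2) * p * P + of_real (deriv V (a\<^sup>2) + w) * (p * P + q * Q)
        - (2 * (p * P + q * Q) - em * (c * (p * P + q * Q) + sn * (p * Q - q * P))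
           - ep * (c * (p * P + q * Q) - sn * (p * Q - q * P)))
      = ev * (p * Q - q * P)"
proof -
  define t where "t = rotating_test E A p q"
  define t0 where "t0 j = t (2*j)" for j
  define t1 where "t1 j = t (2*j+1)" for j
  define vv where "vv j = v (2 * (j mod n))" for j
  define vw where "vw j = v (2 * (j mod n) + 1)" for j
  have "t0 n = t0 0" "t1 n = t1 0"
    by (simp_all add: t0_def t1_def t_def rotating_test_def E_per A_per)
  then have coupling: "(t (2*((j+1) mod n)) - t (2*j)) * (v (2*((j+1) mod n)) - v (2*j))
      + (t (2*((j+1) mod n)+1) - t (2*j+1)) * (v (2*((j+1) mod n)+1) - v (2*j+1))
    = (t0 (Suc j) - t0 j) * (vv (Suc j) - vv j) + (t1 (Suc j) - t1 j) * (vw (Suc j) - vw j)" if "j < n" for j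
    using that periodic_Suc_mod[OF that, of t0] periodic_Suc_mod[OF that, of t1]
    by (simp add: t0_def t1_def vv_def vw_def)
  have "lat_hess_site V n w x t v j
      = of_real (2 * deriv (deriv V) (a\<^sup>2) * a\<^sup>2) * p * (E j * radial A v j)
        + of_real (deriv V (a\<^sup>2) + w) * (p * (E j * radial A v j) + q * (E j * tangential A v j))
        - ((t0 (Suc j) - t0 j) * (vv (Suc j) - vv j) + (t1 (Suc j) - t1 j) * (vw (Suc j) - vw j))"
    if "j < n" for j
    unfolding t_def lat_hess_site_rotating_test[OF x] coupling[OF that, unfolded t_def] ..
  then have "(\<Sum>j<n. lat_hess_site V n w x t v j)
      = of_real (2 * deriv (deriv V) (a\<^sup>2) * a\<^sup>2) * p * P + of_real (deriv V (a\<^sup>2) + w) * (p * P + q * Q)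
        - (\<Sum>j<n. (t0 (Suc j) - t0 j) * (vv (Suc j) - vv j) + (t1 (Suc j) - t1 j) * (vw (Suc j) - vw j))"
    by (simp add: P_def Q_def sum.distrib sum_subtractf distrib_left sum_distrib_left)
  also have "(\<Sum>j<n. (t0 (Suc j) - t0 j) * (vv (Suc j) - vv j) + (t1 (Suc j) - t1 j) * (vw (Suc j) - vw j))
      = 2 * (p * P + q * Q) - em * (c * (p * P + q * Q) + sn * (p * Q - q * P))
        - ep * (c * (p * P + q * Q) - sn * (p * Q - q * P))"
  proof -
    have P_eq: "P = (\<Sum>j<n. E j * (of_real (cos (A j)) * vv j + of_real (sin (A j)) * vw j))"
      and Q_eq: "Q = (\<Sum>j<n. E j * (- of_real (sin (A j)) * vv j + of_real (cos (A j)) * vw j))"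
      unfolding P_def Q_def radial_def tangential_def by (auto simp: vv_def vw_def intro!: sum.cong)
    show ?thesis
      unfolding P_eq Q_eq c_def sn_def t0_def t1_def t_def rotating_test_site
      by (rule coupling_sum_rotating_wave[OF A E emp E_per A_per]) (simp_all add: vv_def vw_def)
  qed
  finally have "(\<Sum>j<n. lat_hess_site V n w x t v j)
      = of_real (2 * deriv (deriv V) (a\<^sup>2) * a\<^sup>2) * p * P + of_real (deriv V (a\<^sup>2) + w) * (p * P + q * Q)
        - (2 * (p * P + q * Q) - em * (c * (p * P + q * Q) + sn * (p * Q - q * P))
           - ep * (c * (p * P + q * Q) - sn * (p * Q - q * P)))" .
  moreover have "sympl_form n t v = p * Q - q * P"
    unfolding t_def P_def Q_def by (rule sympl_form_rotating_test)
  ultimately show ?thesis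
    using H[of t] by simp
qed

text \<open>With \<open>C \<plusminus> i * S = cis (\<plusminus>\<phi>)\<close> this turns the equation for a rotating wave into a
  \<open>2 \<times> 2\<close> block equation.\<close>
lemma rotating_wave_identity:
  fixes b p q P Q ev c s C S i :: "'a::comm_ring_1"
  assumes "b * p * P + (2 - 2 * c) * (p * P + q * Q)
      - (2 * (p * P + q * Q) - (C - i * S) * (c * (p * P + q * Q) + s * (p * Q - q * P))
         - (C + i * S) * (c * (p * P + q * Q) - s * (p * Q - q * P)))
      = ev * (p * Q - q * P)"
  shows "b * p * P + 2 * c * (C - 1) * (p * P + q * Q) = (ev + 2 * i * (s * S)) * (p * Q - q * P)"
proof -
  have "b * p * P + 2 * c * (C - 1) * (p * P + q * Q) - (ev + 2 * i * (s * S)) * (p * Q - q * P)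
    = b * p * P + (2 - 2 * c) * (p * P + q * Q)
      - (2 * (p * P + q * Q) - (C - i * S) * (c * (p * P + q * Q) + s * (p * Q - q * P))
         - (C + i * S) * (c * (p * P + q * Q) - s * (p * Q - q * P)))
      - ev * (p * Q - q * P)"
    by (simp add: algebra_simps)
  also have "\<dots> = 0"
    by (simp only: assms diff_self)
  finally show ?thesis
    by (simp only: right_minus_eq)
qed

lemma fourier_block_equations:
  fixes v :: "nat \<Rightarrow> complex" and A x :: "nat \<Rightarrow> real" and n k :: nat
  assumes n: "0 < n"
    and A: "\<And>j. A (Suc j) = A j + th" and A_per: "cos (A n) = cos (A 0)" "sin (A n) = sin (A 0)"
    and x: "\<And>j. x (2*j) = a * cos (A j)" "\<And>j. x (2*j+1) = a * sin (A j)"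
    and s: "deriv V (a\<^sup>2) + w = 2 - 2 * cos th"
    and H: "\<And>t. (\<Sum>j<n. lat_hess_site V n w x t v j) = ev * sympl_form n t v"
  defines "\<phi> \<equiv> real k * (2 * pi / real n)"
  defines "\<alpha> \<equiv> 2 * cos th * (cos \<phi> - 1)"
    and "z \<equiv> ev + 2 * \<i> * of_real (sin th * sin \<phi>)"
  shows "of_real (2 * deriv (deriv V) (a\<^sup>2) * a\<^sup>2 + \<alpha>) * dft n (radial A v) k = z * dft n (tangential A v) k"
    and "of_real \<alpha> * dft n (tangential A v) k = - (z * dft n (radial A v) k)"
proof -
  define E where "E j = cis (- (real j * real k * (2 * pi / real n)))" for j
  have E_Suc: "E (Suc j) = E j * cis (- \<phi>)" for j
    unfolding E_def \<phi>_def cis_mult by (simp add: algebra_simps add_divide_distrib)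
  have "- (real n * real k * (2 * pi / real n)) = 2 * pi * (- real k)"
    using n by (simp add: field_simps)
  then have "E n = cis (2 * pi * (- real k))"
    unfolding E_def by simp
  also have "\<dots> = 1"
    by (rule cis_multiple_2pi) simp
  finally have E_per: "E n = E 0"
    by (simp add: E_def)
  have emp: "cis (- \<phi>) * cis \<phi> = 1"
    by (simp add: cis_mult)
  have cis_eq: "cis (- \<phi>) = of_real (cos \<phi>) - \<i> * of_real (sin \<phi>)"
    "cis \<phi> = of_real (cos \<phi>) + \<i> * of_real (sin \<phi>)"
    by (simp_all add: complex_eq_iff)
  have dft_eq: "dft n f k = (\<Sum>j<n. E j * f j)" for f
    by (simp add: dft_def E_def)
  have wave: "of_real (2 * deriv (deriv V) (a\<^sup>2) * a\<^sup>2) * p * dft n (radial A v) k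
      + of_real (2 * cos th * (cos \<phi> - 1)) * (p * dft n (radial A v) k + q * dft n (tangential A v) k)
      = z * (p * dft n (tangential A v) k - q * dft n (radial A v) k)" for p q
    using rotating_wave_identity[OF rotating_wave_equation[OF n A A_per E_Suc emp E_per x H, of p q,
        unfolded s cis_eq of_real_diff of_real_mult of_real_numeral, folded dft_eq]]
    unfolding z_def of_real_mult of_real_diff of_real_1 of_real_numeral .
  show "of_real (2 * deriv (deriv V) (a\<^sup>2) * a\<^sup>2 + \<alpha>) * dft n (radial A v) k = z * dft n (tangential A v) k"
    using wave[of 1 0] by (simp add: \<alpha>_def distrib_right)
  show "of_real \<alpha> * dft n (tangential A v) k = - (z * dft n (radial A v) k)"
    using wave[of 0 1] by (simp add: \<alpha>_def)
qed

lemma Re_eq_0_if_square_nonpos_real: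
  fixes z :: complex
  assumes "z\<^sup>2 = - of_real r" "0 \<le> r"
  shows "Re z = 0"
proof (rule ccontr)
  assume "Re z \<noteq> 0"
  moreover have "2 * Re z * Im z = 0"
    using arg_cong[OF assms(1), of Im] by (auto simp: power2_eq_square)
  ultimately have "Im z = 0"
    by auto
  then have "(Re z)\<^sup>2 = - r"
    using arg_cong[OF assms(1), of Re] by (simp add: power2_eq_square)
  moreover have "(Re z)\<^sup>2 > 0"
    using \<open>Re z \<noteq> 0\<close> by simp
  ultimately show False
    using assms(2) by linarith
qed

lemma Re_eq_0_of_block_equations:
  fixes P Q z :: complex and \<alpha> b :: real
  assumes PQ: "of_real (b + \<alpha>) * P = z * Q" and QP: "of_real \<alpha> * Q = - (z * P)"
    and "P \<noteq> 0 \<or> Q \<noteq> 0" and "0 \<le> \<alpha> * (\<alpha> + b)"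
  shows "Re z = 0"
proof -
  have "(of_real (\<alpha> * (\<alpha> + b)) + z\<^sup>2) * P = of_real \<alpha> * (of_real (b + \<alpha>) * P) + z * (z * P)"
    by (simp add: algebra_simps power2_eq_square)
  also have "\<dots> = z * (of_real \<alpha> * Q) + z * (z * P)"
    by (simp only: PQ mult.left_commute)
  also have "\<dots> = 0"
    by (simp only: QP) simp
  finally have P0: "(of_real (\<alpha> * (\<alpha> + b)) + z\<^sup>2) * P = 0" .
  have "(of_real (\<alpha> * (\<alpha> + b)) + z\<^sup>2) * Q = of_real (b + \<alpha>) * (of_real \<alpha> * Q) + z * (z * Q)"
    by (simp add: algebra_simps power2_eq_square)
  also have "\<dots> = - (z * (of_real (b + \<alpha>) * P)) + z * (z * Q)"
    by (simp only: QP mult_minus_right mult.left_commute)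
  also have "\<dots> = 0"
    by (simp only: PQ) simp
  finally have Q0: "(of_real (\<alpha> * (\<alpha> + b)) + z\<^sup>2) * Q = 0" .
  from P0 Q0 assms(3) have "z\<^sup>2 = - of_real (\<alpha> * (\<alpha> + b))"
    by (auto simp: add_eq_0_iff)
  then show ?thesis
    using assms(4) by (rule Re_eq_0_if_square_nonpos_real)
qed

section \<open>The stability condition\<close>

lemma cos_mult_le_cos_step:
  fixes n k :: nat
  assumes "1 \<le> k" "k < n"
  shows "cos (real k * (2 * pi / real n)) \<le> cos (2 * pi / real n)"
proof -
  define z where "z = 2 * pi / real n"
  have z: "0 < z" "real n * z = 2 * pi"
    using assms by (simp_all add: z_def)
  show ?thesis
  proof (cases "real k * z \<le> pi")
    case True
    moreover have "z \<le> real k * z"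
      using assms z by simp
    ultimately show ?thesis
      using cos_monotone_0_pi_le[of z "real k * z"] z unfolding z_def by simp
  next
    case False
    have k: "real k * z = 2 * pi - real (n - k) * z"
      using assms z by (simp add: of_nat_diff algebra_simps)
    have "1 \<le> real (n - k)"
      using assms by simp
    then have "z \<le> real (n - k) * z"
      using z by simp
    moreover have "real (n - k) * z \<le> pi"
      using False k by simp
    ultimately have "cos (real (n - k) * z) \<le> cos z"
      using cos_monotone_0_pi_le[of z "real (n - k) * z"] z by simp
    then show ?thesis
      unfolding z_def[symmetric] k cos_2pi_minus .
  qed
qed

lemma cos_pos_if_below_quarter:
  assumes "1 \<le> m" "real m < real n / 4"
  shows "0 < cos (real m * (2 * pi / real n))"
proof (rule cos_gt_zero_pi)
  have "0 < real n"
    using assms by linarith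
  with assms have "0 < real m * (2 * pi / real n)"
    by simp
  then show "- (pi / 2) < real m * (2 * pi / real n)"
    using pi_gt_zero by linarith
  show "real m * (2 * pi / real n) < pi / 2"
    using assms \<open>0 < real n\<close> by (simp add: field_simps)
qed

lemma cos_neg_if_above_quarter:
  assumes "real n / 4 < real m" "real m \<le> real n / 2"
  shows "cos (real m * (2 * pi / real n)) < 0"
proof -
  have "0 < real n"
    using assms by linarith
  with assms have "0 < cos (pi - real m * (2 * pi / real n))"
    by (intro cos_gt_zero_pi) (simp_all add: field_simps)
  then show ?thesis
    by simp
qed

lemma sigma_m_eq_sgn:
  assumes "1 \<le> m" "real m < real n / 4 \<or> (real n / 4 < real m \<and> real m \<le> real n / 2)"
  shows "sigma_m V n m a = sgn (cos (real m * (2 * pi / real n)) * deriv (deriv V) (a\<^sup>2))"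
  using assms cos_pos_if_below_quarter[of m n] cos_neg_if_above_quarter[of n m]
  by (auto simp: sigma_m_def sgn_mult)

lemma phi1_eq:
  "phi1 V n m a
    = a\<^sup>2 * deriv (deriv V) (a\<^sup>2) / (cos (real m * (2 * pi / real n)) * (1 - cos (2 * pi / real n)))"
proof -
  have "alpha1 n m = 2 * (cos (real m * (2 * pi / real n)) * (1 - cos (2 * pi / real n)))"
    using cos_double_sin[of "pi / real n"] by (simp add: alpha1_def)
  then show ?thesis
    by (simp add: phi1_def)
qed

lemma block_discriminant_nonneg:
  fixes c b d d1 :: real
  assumes "0 < d1" "d = 0 \<or> d1 \<le> d" "c * b < 0 \<or> (0 < c * b \<and> b / (c * d1) < 1)"
  shows "0 \<le> c * d * (c * d - b)"
proof (cases "d = 0")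
  case False
  with assms(1,2) have "0 < d" "d1 \<le> d"
    by auto
  show ?thesis
  proof (cases "c * b < 0")
    case True
    with \<open>0 < d\<close> have "c * b * d \<le> 0"
      by (simp add: mult_nonpos_nonneg)
    moreover have "0 \<le> c * d * (c * d)"
      by simp
    ultimately show ?thesis
      by (simp add: algebra_simps)
  next
    case False
    with assms(3) have cb: "0 < c * b" "b / (c * d1) < 1"
      by auto
    then have "c \<noteq> 0" "0 < b / c"
      by (auto simp: zero_less_divide_iff zero_less_mult_iff)
    moreover from cb(2) have "b / c / d1 < 1"
      by simp
    then have "b / c < d1"
      by (simp only: divide_less_eq_1_pos[OF assms(1)])
    ultimately have "b / c \<le> d"
      using \<open>d1 \<le> d\<close> by simp
    then have "0 \<le> c * c * d * (d - b / c)"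
      using \<open>0 < d\<close> by simp
    also have "\<dots> = c * d * (c * d - b)"
      using \<open>c \<noteq> 0\<close> by (simp add: algebra_simps)
    finally show ?thesis .
  qed
qed simp

lemma stability_block_condition:
  fixes n m k :: nat
  assumes "3 \<le> n" "1 \<le> m" "real m < real n / 4 \<or> (real n / 4 < real m \<and> real m \<le> real n / 2)"
    and "0 < a" "k < n"
    and "sigma_m V n m a < 0 \<or> (0 < sigma_m V n m a \<and> phi1 V n m a < 1)"
  defines "c \<equiv> cos (real m * (2 * pi / real n))"
  defines "\<alpha> \<equiv> 2 * c * (cos (real k * (2 * pi / real n)) - 1)"
  shows "0 \<le> \<alpha> * (\<alpha> + 2 * deriv (deriv V) (a\<^sup>2) * a\<^sup>2)"
proof -
  define D where "D = deriv (deriv V) (a\<^sup>2)"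
  define d where "d = 1 - cos (real k * (2 * pi / real n))"
  define d1 where "d1 = 1 - cos (2 * pi / real n)"
  have "cos (2 * pi / real n) < cos 0"
    using assms(1) by (intro cos_monotone_0_pi) (simp_all add: field_simps)
  then have "0 < d1"
    by (simp add: d1_def)
  moreover have "d = 0 \<or> d1 \<le> d"
    using cos_mult_le_cos_step[of k n] assms(5) by (cases "k = 0") (simp_all add: d_def d1_def)
  moreover have "c * (D * a\<^sup>2) < 0 \<or> (0 < c * (D * a\<^sup>2) \<and> D * a\<^sup>2 / (c * d1) < 1)"
    using assms(6) \<open>0 < a\<close> unfolding sigma_m_eq_sgn[OF assms(2,3)] phi1_eq
    by (auto simp: c_def D_def d1_def sgn_less sgn_greater zero_less_mult_iff mult_less_0_iff mult.commute)
  ultimately have "0 \<le> c * d * (c * d - D * a\<^sup>2)"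
    by (rule block_discriminant_nonneg)
  then show ?thesis
    by (simp add: \<alpha>_def d_def D_def algebra_simps)
qed

lemma smooth_fun_differentiable:
  assumes "smooth_fun V"
  shows "\<And>y. V differentiable at y" "\<And>y. deriv V differentiable at y"
  using assms[unfolded smooth_fun_def, rule_format, of 0] assms[unfolded smooth_fun_def, rule_format, of 1]
  by simp_all

lemma eigenvector_lat_hess_site_sum:
  assumes n: "0 < n" and dV: "\<And>y. V differentiable at y" "\<And>y. deriv V differentiable at y"
    and v: "v \<in> carrier_vec (2*n)"
    and eigen: "map_mat of_real (sympl_J n * hessian_mat (2*n) (lat_H V n w) x) *\<^sub>v v = ev \<cdot>\<^sub>v v"
  shows "(\<Sum>j<n. lat_hess_site V n w x t (($) v) j) = ev * sympl_form n t (($) v)"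
proof -
  have "(\<Sum>j<n. lat_hess_site V n w x t (($) v) j) = bilin_form (2*n) t (\<lambda>k l. lat_hess V n w k l x) (($) v)"
    using n by (rule bilin_form_lat_hess[symmetric])
  also have "\<dots> = bilin_form (2*n) t (\<lambda>k l. hessian_mat (2*n) (lat_H V n w) x $$ (k, l)) (($) v)"
    by (rule bilin_form_cong) (simp add: hessian_mat_lat_H[OF dV])
  also have "\<dots> = ev * sympl_form n t (($) v)"
    by (rule bilin_form_eigenvector[OF _ v eigen]) (simp add: hessian_mat_def)
  finally show ?thesis .
qed

definition lattice_angle :: "nat \<Rightarrow> nat \<Rightarrow> nat \<Rightarrow> real" where
  "lattice_angle n m j = real j * (real m * (2 * pi / real n))"

lemma lattice_angle_Suc: "lattice_angle n m (Suc j) = lattice_angle n m j + real m * (2 * pi / real n)"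
  by (simp only: lattice_angle_def of_nat_Suc distrib_right mult_1)

lemma lattice_angle_periodic:
  assumes "0 < n"
  shows "cos (lattice_angle n m n) = cos (lattice_angle n m 0)" "sin (lattice_angle n m n) = sin (lattice_angle n m 0)"
proof -
  have "lattice_angle n m n = 2 * pi * real m"
    using assms by (simp add: lattice_angle_def)
  then show "cos (lattice_angle n m n) = cos (lattice_angle n m 0)" "sin (lattice_angle n m n) = sin (lattice_angle n m 0)"
    by (simp_all add: lattice_angle_def cos_integer_2pi sin_integer_2pi)
qed

lemma eq_am_polar:
  "eq_am n m a (2*j) = a * cos (lattice_angle n m j)" "eq_am n m a (2*j+1) = a * sin (lattice_angle n m j)"
  by (simp_all add: eq_am_def lattice_angle_def mult.assoc)

lemma lat_omega_eq: "deriv V (a\<^sup>2) + lat_omega V n m a = 2 - 2 * cos (real m * (2 * pi / real n))"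
proof -
  define th where "th = real m * (2 * pi / real n)"
  have "cos th = 1 - 2 * (sin (th / 2))\<^sup>2"
    using cos_double_sin[of "th / 2"] by simp
  moreover have "lat_omega V n m a = 4 * (sin (th / 2))\<^sup>2 - deriv V (a\<^sup>2)"
    by (simp add: lat_omega_def th_def)
  ultimately show ?thesis
    by (simp add: th_def)
qed

theorem theorem2:
  fixes V :: "real \<Rightarrow> real" and n m :: nat and a :: real
  assumes "n \<ge> 3"
    and "1 \<le> m" and "(real m < real n / 4) \<or> (real n / 4 < real m \<and> real m \<le> real n / 2)"
    and "a > 0"
    and "smooth_fun V"
    and "deriv (deriv V) (a\<^sup>2) \<noteq> 0"
    and "sigma_m V n m a < 0 \<or> (sigma_m V n m a > 0 \<and> phi1 V n m a < 1)"
  shows "linearly_stable V n m a"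
  unfolding linearly_stable_def
proof (intro allI impI)
  fix ev :: complex
  assume "eigenvalue (map_mat of_real (sympl_J n * hessian_mat (2*n) (lat_H V n (lat_omega V n m a)) (eq_am n m a))) ev"
  then obtain v where v: "v \<in> carrier_vec (2*n)" "v \<noteq> 0\<^sub>v (2*n)"
    and eigen: "map_mat of_real (sympl_J n * hessian_mat (2*n) (lat_H V n (lat_omega V n m a)) (eq_am n m a)) *\<^sub>v v
      = ev \<cdot>\<^sub>v v"
    unfolding eigenvalue_def eigenvector_def by (auto simp: sympl_J_def)
  have n: "0 < n"
    using assms(1) by simp
  note H = eigenvector_lat_hess_site_sum[OF n smooth_fun_differentiable[OF assms(5)] v(1) eigen]
  obtain k where "k < n"
    and mode: "dft n (radial (lattice_angle n m) (($) v)) k \<noteq> 0 \<or> dft n (tangential (lattice_angle n m) (($) v)) k \<noteq> 0"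
    using exists_nonzero_mode[OF v] by blast
  have "Re (ev + 2 * \<i> * of_real (sin (real m * (2 * pi / real n)) * sin (real k * (2 * pi / real n)))) = 0"
    using fourier_block_equations[OF n lattice_angle_Suc lattice_angle_periodic[OF n] eq_am_polar lat_omega_eq H]
      mode stability_block_condition[OF assms(1-4) \<open>k < n\<close> assms(7)]
    by (rule Re_eq_0_of_block_equations)
  then show "Re ev = 0"
    by simp
qed

end
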